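(* For each $i\in\{1,2,3\}$ the points $P_i$, $P_i'$ and $C_2$ are collinear. Consequently the triangles $T=P_1P_2P_3$ and $T'=P_1'P_2'P_3'$ are perspective with perspector $C_2$.
   Context: Let $a>b>0$ and $c>0$ with $c^2=a^2-b^2$. Let $\mathcal{E}$ be the ellipse $x^2/a^2+y^2/b^2=1$, parametrized by $P(t)=(a\cos t,b\sin t)$. Fix $u\in\mathbb{R}$, let $M=(a\cos u,b\sin u)$ and $\Delta_u(t)=(x_u(t),y_u(t))$, where $x_u(t)=\frac1a\big(c^2(1+\cos(t+u))\cos t-a^2\cos u\big)$ and $y_u(t)=\frac1b\big(c^2\cos t\sin(t+u)-c^2\sin t-a^2\sin u\big)$ (the negative pedal curve of $\mathcal{E}$ with respect to $M$). For $i=1,2,3$ let $t_i=-u/3-2\pi(i-1)/3$, $P_i=P(t_i)$, $P_i'=\Delta_u(t_i)$ (the cusps). Let $C_2=\left(-\frac{a^2+b^2}{2a}\cos u,-\frac{a^2+b^2}{2b}\sin u\right)$ (the area centroid of $\Delta_u$). *)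

theory Defs
  imports "HOL-Analysis.Analysis"
begin

definition ell_pt :: "real \<Rightarrow> real \<Rightarrow> real \<Rightarrow> real \<times> real" where
  "ell_pt a b t = (a * cos t, b * sin t)"

text \<open>Negative pedal curve of the ellipse with respect to M = P(u).\<close>
definition neg_pedal :: "real \<Rightarrow> real \<Rightarrow> real \<Rightarrow> real \<Rightarrow> real \<Rightarrow> real \<times> real" where
  "neg_pedal a b c u t =
     ((1 / a) * (c^2 * (1 + cos (t + u)) * cos t - a^2 * cos u),
      (1 / b) * (c^2 * cos t * sin (t + u) - c^2 * sin t - a^2 * sin u))"

definition cusp_param :: "real \<Rightarrow> nat \<Rightarrow> real" where
  "cusp_param u i = - u / 3 - 2 * pi * (real i - 1) / 3"

text \<open>Area centroid C_2 of the negative pedal curve.\<close>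
definition centroid_C2 :: "real \<Rightarrow> real \<Rightarrow> real \<Rightarrow> real \<times> real" where
  "centroid_C2 a b u =
     (- (a^2 + b^2) / (2 * a) * cos u, - (a^2 + b^2) / (2 * b) * sin u)"

end

theory Submission
  imports Defs
begin

(* At a cusp parameter t one has u + 3t = 2 pi k for an integer k, so cos u, sin u,
   cos (t + u) and sin (t + u) become the triple- and double-angle polynomials in
   x = cos t, y = sin t.  The vanishing of the cross product of P'(t) - P(t) and C2 - P(t)
   is then a polynomial identity modulo x^2 + y^2 = 1. *)

lemma collinear_0_prod_cross:
  fixes v w :: "real \<times> real"
  assumes "fst v * snd w = snd v * fst w"
  shows "collinear {0, v, w}"
proof (cases "fst v = 0")
  case True
  show ?thesis
  proof (cases "snd v = 0")
    case True
    with \<open>fst v = 0\<close> have "v = 0" by (simp add: prod_eq_iff)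
    then show ?thesis by simp
  next
    case False
    with True assms have "w = (snd w / snd v) *\<^sub>R v" by (simp add: prod_eq_iff)
    then show ?thesis unfolding collinear_lemma by blast
  qed
next
  case False
  with assms have "w = (fst w / fst v) *\<^sub>R v" by (simp add: prod_eq_iff field_simps)
  then show ?thesis unfolding collinear_lemma by blast
qed

lemma collinear_prod_cross:
  fixes p q r :: "real \<times> real"
  assumes "(fst q - fst p) * (snd r - snd p) = (snd q - snd p) * (fst r - fst p)"
  shows "collinear {p, q, r}"
proof -
  have "collinear {0, q - p, r - p}"
    using assms by (intro collinear_0_prod_cross) simp
  then have "collinear {q, p, r}" by (simp add: collinear_3)
  then show ?thesis by (simp add: insert_commute)
qed

lemma sin_treble_sin: "sin (3 * x) = 3 * sin x - 4 * sin x ^ 3" for x :: real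
proof -
  have "sin (3 * x) = sin (2 * x + x)" by simp
  also have "\<dots> = 2 * sin x * cos x * cos x + (1 - 2 * sin x ^ 2) * sin x"
    by (simp only: sin_add sin_double cos_double_sin)
  also have "\<dots> = 3 * sin x - 4 * sin x ^ 3"
    using sin_cos_squared_add[of x] by algebra
  finally show ?thesis .
qed

lemma cusp_param_cusp_condition: "u + 3 * cusp_param u i = 2 * pi * of_int (1 - int i)"
  by (simp add: cusp_param_def field_simps)

lemma trig_at_cusp:
  assumes "u + 3 * t = 2 * pi * of_int k"
  shows "cos u = cos (3 * t)" "sin u = - sin (3 * t)"
    and "cos (t + u) = cos (2 * t)" "sin (t + u) = - sin (2 * t)"
proof -
  have u: "u = 2 * pi * of_int k - 3 * t" and tu: "t + u = 2 * pi * of_int k - 2 * t"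
    using assms by linarith+
  show "cos u = cos (3 * t)" "sin u = - sin (3 * t)"
    unfolding u cos_diff sin_diff by simp_all
  show "cos (t + u) = cos (2 * t)" "sin (t + u) = - sin (2 * t)"
    unfolding tu cos_diff sin_diff by simp_all
qed

lemma collinear_at_cusp:
  fixes a b c u t :: real
  assumes "a > 0" "b > 0" "c^2 = a^2 - b^2" "u + 3 * t = 2 * pi * of_int k"
  shows "collinear {ell_pt a b t, neg_pedal a b c u t, centroid_C2 a b u}"
proof -
  define x y where "x = cos t" and "y = sin t"
  have circle: "x^2 + y^2 = 1" unfolding x_def y_def by simp
  have "cos u = 4*x^3 - 3*x" "cos (t + u) = 2*x^2 - 1" "sin (t + u) = - 2*x*y"
    using trig_at_cusp[OF assms(4)] cos_treble_cos[of t] cos_double_cos[of t] sin_double[of t]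
    unfolding x_def y_def by simp_all
  moreover have "sin u = - y * (4*x^2 - 1)"
    using trig_at_cusp(2)[OF assms(4)] sin_treble_sin[of t] circle
    unfolding x_def[symmetric] y_def[symmetric] by algebra
  ultimately show ?thesis
    using assms(1,2) circle
    unfolding ell_pt_def neg_pedal_def centroid_C2_def assms(3) x_def[symmetric] y_def[symmetric]
    by (intro collinear_prod_cross) (simp add: field_simps, algebra)
qed

theorem proposition8p2:
  fixes a b c u :: real
  assumes "a > b" and "b > 0" and "c > 0" and "c^2 = a^2 - b^2"
  shows "\<forall>i \<in> {1, 2, 3::nat}.
           collinear {ell_pt a b (cusp_param u i),
                      neg_pedal a b c u (cusp_param u i),
                      centroid_C2 a b u}"
  using assms collinear_at_cusp[OF _ _ _ cusp_param_cusp_condition] by auto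

end
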